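(* Let $\varphi$ be a strongly convex function and let $\mu$ be a positive finite Borel measure on $\mathbb{D}$. Then $\|B(\mu)\|_{(L^\varphi)^*}<\infty$ if and only if $\int_{\mathbb{D}}h\,d\mu<\infty$ for every $h\in\operatorname{Har}^+_\varphi$. Moreover, $$\|B(\mu)\|_{(L^\varphi)^*}=\sup\Big\{\int_{\mathbb{D}}h\,d\mu:\ h=P[w]\in\operatorname{Har}^+_\varphi,\ \|w\|_\varphi\le1\Big\}.$$
   Context: A function $\varphi:\mathbb{R}\to[0,\infty)$ is strongly convex if it is convex, nondecreasing, $\lim_{t\to\infty}\varphi(t)/t=\infty$, and there are $M,K\ge0$, $t_0\in\mathbb{R}$ with $\varphi(t+2)\le M\varphi(t)+K$ for $t\ge t_0$. $L^\varphi(\mathbb{T})$ is the Orlicz space of measurable $u$ with $\varphi\circ|u|\in L^1(m)$ ($m$ normalized Lebesgue measure on $\mathbb{T}$); $\varphi$ is modified on some $[0,t_0]$ to a convex function on $[0,\infty)$ vanishing at $0$, $L^\varphi$ carries the norm $\|u\|_\varphi=\inf\{t>0:\int\varphi(|u|/t)dm\le t\}$, and $(L^\varphi)^*$ is the dual with dual norm. $P[w](z)=\int_{\mathbb{T}}P_z(\zeta)w(\zeta)dm(\zeta)$ with $P_z(\zeta)=\frac{1-|z|^2}{|\zeta-z|^2}$; $\operatorname{Har}^+_\varphi=\{P[w]:0\le w\in L^\varphi\}$. The Poisson balayage is $B(\mu)(\zeta)=\int_{\mathbb{D}}P_z(\zeta)\,d\mu(z)$. *)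

theory Defs
  imports "HOL-Analysis.Analysis"
begin

definition strongly_convex :: "(real \<Rightarrow> real) \<Rightarrow> bool" where
  "strongly_convex \<phi> \<longleftrightarrow>
     (\<forall>t. 0 \<le> \<phi> t) \<and> convex_on UNIV \<phi> \<and> mono \<phi> \<and>
     filterlim (\<lambda>t. \<phi> t / t) at_top at_top \<and>
     (\<exists>M K t0. M \<ge> 0 \<and> K \<ge> 0 \<and> (\<forall>t\<ge>t0. \<phi> (t + 2) \<le> M * \<phi> t + K))"

definition admissible_modification :: "(real \<Rightarrow> real) \<Rightarrow> (real \<Rightarrow> real) \<Rightarrow> bool" where
  "admissible_modification \<phi> \<psi> \<longleftrightarrow>
     convex_on {0..} \<psi> \<and> \<psi> 0 = 0 \<and> (\<forall>t\<ge>0. 0 \<le> \<psi> t) \<and>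
     (\<exists>t0. \<forall>t\<ge>t0. \<psi> t = \<phi> t)"

definition circle_measure :: "complex measure" where
  "circle_measure = distr (uniform_measure lborel {0..2*pi}) borel cis"

definition poisson_kernel :: "complex \<Rightarrow> complex \<Rightarrow> real" where
  "poisson_kernel z \<zeta> = (1 - (cmod z)\<^sup>2) / (cmod (\<zeta> - z))\<^sup>2"

definition orlicz_space :: "(real \<Rightarrow> real) \<Rightarrow> (complex \<Rightarrow> real) set" where
  "orlicz_space \<phi> = {u. u \<in> borel_measurable circle_measure \<and>
                        integrable circle_measure (\<lambda>\<zeta>. \<phi> \<bar>u \<zeta>\<bar>)}"

definition orlicz_norm :: "(real \<Rightarrow> real) \<Rightarrow> (complex \<Rightarrow> real) \<Rightarrow> real" where
  "orlicz_norm \<psi> u = Inf {t. 0 < t \<and>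
       (\<integral>\<^sup>+ \<zeta>. ennreal (\<psi> (\<bar>u \<zeta>\<bar> / t)) \<partial>circle_measure) \<le> ennreal t}"

definition poisson_integral :: "(complex \<Rightarrow> real) \<Rightarrow> complex \<Rightarrow> real" where
  "poisson_integral w z = (\<integral> \<zeta>. poisson_kernel z \<zeta> * w \<zeta> \<partial>circle_measure)"

definition balayage :: "complex measure \<Rightarrow> complex \<Rightarrow> ennreal" where
  "balayage \<mu> \<zeta> = (\<integral>\<^sup>+ z. ennreal (poisson_kernel z \<zeta>) \<partial>\<mu>)"

text \<open>Dual norm of the (nonnegative) function g as a functional u \<mapsto> \<integral> u g dm on L^\<phi>.
  For g \<ge> 0 this equals sup { |\<integral> u g dm| : \<parallel>u\<parallel> \<le> 1 } (possibly \<infinity>).\<close>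
definition dual_norm :: "(real \<Rightarrow> real) \<Rightarrow> (real \<Rightarrow> real) \<Rightarrow> (complex \<Rightarrow> ennreal) \<Rightarrow> ennreal" where
  "dual_norm \<phi> \<psi> g = (SUP u \<in> {u. u \<in> orlicz_space \<phi> \<and> orlicz_norm \<psi> u \<le> 1}.
       \<integral>\<^sup>+ \<zeta>. ennreal \<bar>u \<zeta>\<bar> * g \<zeta> \<partial>circle_measure)"

end

theory Submission
  imports Defs "HOL-Probability.Probability"
begin

(* By Tonelli, \<integral> |u| B(\<mu>) dm = \<integral> P[|u|] d\<mu>, because \<mu> lives on the open disc, where the
   Poisson kernel is bounded. Both claims are therefore statements about the functional
   u \<mapsto> \<integral> |u| g dm for a nonnegative g, and the supremum formula follows by replacing u with |u|.
   If the dual norm is finite, every u in L^\<phi> can be rescaled into the unit ball. If it is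
   infinite, pick u_n in the unit ball whose pairing with g exceeds 2^(n+2) n, and glue them into
   w = \<Sum>_n 2^-(n+1) |u_n|/2. Jensen's inequality for \<phi> with these geometric weights, together
   with a uniform bound on \<integral> \<phi>(|u|/2) dm over the unit ball, puts w into L^\<phi>, while the
   pairing of w with g exceeds every n. *)

section \<open>The normalized measure on the circle\<close>

lemma space_circle_measure [simp]: "space circle_measure = UNIV"
  by (simp add: circle_measure_def)

lemma sets_circle_measure [simp, measurable_cong]: "sets circle_measure = sets borel"
  by (simp add: circle_measure_def)

lemma borel_measurable_circle_measure_iff [simp]:
  "f \<in> borel_measurable circle_measure \<longleftrightarrow> f \<in> borel_measurable borel"
  by (simp add: measurable_def)

lemma borel_measurable_cis [measurable]: "cis \<in> borel_measurable borel"
  by (intro borel_measurable_continuous_onI continuous_intros)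

lemma prob_space_circle_measure: "prob_space circle_measure"
  unfolding circle_measure_def
  by (intro prob_space.prob_space_distr prob_space_uniform_measure) auto

interpretation circle: prob_space circle_measure
  by (rule prob_space_circle_measure)

lemma emeasure_circle_measure_UNIV [simp]: "emeasure circle_measure UNIV = 1"
  using circle.emeasure_space_1 by simp

lemma AE_circle_measure_norm_eq_1: "AE \<zeta> in circle_measure. cmod \<zeta> = 1"
  unfolding circle_measure_def by (subst AE_distr_iff) auto

section \<open>Convexity and strongly convex functions\<close>

lemma strongly_convex_nonneg: "strongly_convex \<phi> \<Longrightarrow> 0 \<le> \<phi> t"
  by (simp add: strongly_convex_def)

lemma strongly_convex_convex_on: "strongly_convex \<phi> \<Longrightarrow> convex_on UNIV \<phi>"
  by (simp add: strongly_convex_def)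

lemma strongly_convex_mono: "strongly_convex \<phi> \<Longrightarrow> mono \<phi>"
  by (simp add: strongly_convex_def)

lemma borel_measurable_strongly_convex: "strongly_convex \<phi> \<Longrightarrow> \<phi> \<in> borel_measurable borel"
  by (intro borel_measurable_mono strongly_convex_mono)

lemma strongly_convex_superlinear:
  assumes "strongly_convex \<phi>"
  obtains T where "\<And>t. 0 \<le> t \<Longrightarrow> t \<le> \<phi> t + T"
proof -
  have "filterlim (\<lambda>t. \<phi> t / t) at_top at_top"
    using assms by (simp add: strongly_convex_def)
  then have "eventually (\<lambda>t. 1 \<le> \<phi> t / t) at_top"
    by (simp add: filterlim_at_top)
  then obtain N where N: "\<And>t. t \<ge> N \<Longrightarrow> 1 \<le> \<phi> t / t"
    by (auto simp: eventually_at_top_linorder)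
  have "t \<le> \<phi> t + max N 1" if "0 \<le> t" for t
  proof (cases "t \<ge> max N 1")
    case True
    then show ?thesis
      using N[of t] by (simp add: le_divide_eq split: if_splits)
  next
    case False
    then show ?thesis
      using strongly_convex_nonneg[OF assms, of t] by linarith
  qed
  then show ?thesis by (rule that)
qed

lemma admissible_modification_nonneg: "admissible_modification \<phi> \<psi> \<Longrightarrow> 0 \<le> t \<Longrightarrow> 0 \<le> \<psi> t"
  by (simp add: admissible_modification_def)

lemma admissible_modification_scale_le:
  assumes "admissible_modification \<phi> \<psi>" "0 \<le> x" "0 \<le> c" "c \<le> 1"
  shows "\<psi> (c * x) \<le> c * \<psi> x"
proof -
  have "convex_on {0..} \<psi>" "\<psi> 0 = 0"
    using assms(1) by (auto simp: admissible_modification_def)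
  then show ?thesis
    using convex_onD[of "{0..}" \<psi> c 0 x] assms(2-4) by simp
qed

lemma admissible_modification_mono:
  assumes "admissible_modification \<phi> \<psi>" "0 \<le> s" "s \<le> t"
  shows "\<psi> s \<le> \<psi> t"
proof (cases "t = 0")
  case False
  then have "\<psi> ((s / t) * t) \<le> (s / t) * \<psi> t"
    using assms by (intro admissible_modification_scale_le) auto
  also have "\<dots> \<le> \<psi> t"
    using assms False admissible_modification_nonneg[OF assms(1), of t]
    by (intro mult_left_le_one_le) (auto simp: divide_le_eq_1)
  finally show ?thesis
    using False by simp
qed (use assms in simp)

lemma borel_measurable_admissible_modification:
  assumes "admissible_modification \<phi> \<psi>" "f \<in> borel_measurable M" "\<And>x. 0 \<le> f x"
  shows "(\<lambda>x. \<psi> (f x)) \<in> borel_measurable M"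
proof -
  have "(\<lambda>s. \<psi> (max s 0)) \<in> borel_measurable borel"
    using admissible_modification_mono[OF assms(1)]
    by (intro borel_measurable_mono) (simp add: mono_def)
  from measurable_compose[OF assms(2) this] show ?thesis
    using assms(3) by (simp add: max_absorb1)
qed

lemma admissible_modification_comparable:
  assumes "admissible_modification \<phi> \<psi>" "mono \<phi>" "\<And>t. 0 \<le> \<phi> t"
  obtains C where "0 \<le> C" "\<And>s. 0 \<le> s \<Longrightarrow> \<psi> s \<le> \<phi> s + C" "\<And>s. 0 \<le> s \<Longrightarrow> \<phi> s \<le> \<psi> s + C"
proof -
  obtain t0 where t0: "\<And>t. t \<ge> t0 \<Longrightarrow> \<psi> t = \<phi> t"
    using assms(1) by (auto simp: admissible_modification_def)
  define t1 where "t1 = max t0 0"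
  have \<psi>_nonneg: "\<And>t. 0 \<le> t \<Longrightarrow> 0 \<le> \<psi> t"
    using admissible_modification_nonneg[OF assms(1)] .
  show ?thesis
  proof (rule that[of "\<psi> t1 + \<phi> t1"])
    show "0 \<le> \<psi> t1 + \<phi> t1"
      using \<psi>_nonneg[of t1] assms(3)[of t1] t1_def by simp
  next
    fix s :: real assume "0 \<le> s"
    then show "\<psi> s \<le> \<phi> s + (\<psi> t1 + \<phi> t1)" "\<phi> s \<le> \<psi> s + (\<psi> t1 + \<phi> t1)"
      using t0[of s] t1_def assms(3)[of s] assms(3)[of t1] \<psi>_nonneg[of s] \<psi>_nonneg[of t1]
        admissible_modification_mono[OF assms(1), of s t1] monoD[OF assms(2), of s t1]
      by (cases "s \<le> t1"; force)+
  qed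
qed

lemma convex_on_geometric_sum_le:
  fixes f :: "real \<Rightarrow> real"
  assumes "convex_on UNIV f"
  shows "f ((\<Sum>n<N. (1/2)^Suc n * x n) + (1/2)^N * y)
    \<le> (\<Sum>n<N. (1/2)^Suc n * f (x n)) + (1/2)^N * f y"
proof (induction N arbitrary: y)
  case (Suc N)
  have "f ((\<Sum>n<Suc N. (1/2)^Suc n * x n) + (1/2)^Suc N * y)
      = f ((\<Sum>n<N. (1/2)^Suc n * x n) + (1/2)^N * ((1 - 1/2) * x N + 1/2 * y))"
    by (simp add: algebra_simps)
  also have "\<dots> \<le> (\<Sum>n<N. (1/2)^Suc n * f (x n)) + (1/2)^N * f ((1 - 1/2) * x N + 1/2 * y)"
    by (rule Suc.IH)
  also have "\<dots> \<le> (\<Sum>n<N. (1/2)^Suc n * f (x n)) + (1/2)^N * ((1 - 1/2) * f (x N) + 1/2 * f y)"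
    using convex_onD[OF assms, of "1/2" "x N" y] by (intro add_left_mono mult_left_mono) auto
  also have "\<dots> = (\<Sum>n<Suc N. (1/2)^Suc n * f (x n)) + (1/2)^Suc N * f y"
    by (simp add: algebra_simps)
  finally show ?case .
qed simp

lemma convex_on_geometric_suminf_le:
  fixes f :: "real \<Rightarrow> real"
  assumes f: "convex_on UNIV f"
    and x: "summable (\<lambda>n. (1/2)^Suc n * x n)" and fx: "summable (\<lambda>n. (1/2)^Suc n * f (x n))"
  shows "f (\<Sum>n. (1/2)^Suc n * x n) \<le> (\<Sum>n. (1/2)^Suc n * f (x n))"
proof (rule LIMSEQ_le)
  have "continuous_on UNIV f"
    using f by (rule convex_on_continuous[OF open_UNIV])
  then have "isCont f t" for t
    by (simp add: continuous_on_eq_continuous_at)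
  then show "(\<lambda>N. f (\<Sum>n<N. (1/2)^Suc n * x n)) \<longlonglongrightarrow> f (\<Sum>n. (1/2)^Suc n * x n)"
    by (rule isCont_tendsto_compose[OF _ summable_LIMSEQ[OF x]])
  have "(\<lambda>N. (1/2::real)^N * f 0) \<longlonglongrightarrow> 0 * f 0"
    by (intro tendsto_intros) simp
  then show "(\<lambda>N. (\<Sum>n<N. (1/2)^Suc n * f (x n)) + (1/2)^N * f 0) \<longlonglongrightarrow> (\<Sum>n. (1/2)^Suc n * f (x n))"
    using summable_LIMSEQ[OF fx] by (metis (no_types) add.right_neutral mult_zero_left tendsto_add)
  show "\<exists>N. \<forall>n\<ge>N. f (\<Sum>k<n. (1/2)^Suc k * x k) \<le> (\<Sum>k<n. (1/2)^Suc k * f (x k)) + (1/2)^n * f 0"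
    using convex_on_geometric_sum_le[OF f, where x = x and y = 0] by auto
qed

lemma suminf_ennreal_power_half: "(\<Sum>n. ennreal ((1/2)^Suc n)) = 1"
proof -
  have "(\<Sum>n. ennreal ((1/2)^Suc n)) = ennreal (\<Sum>n. (1/2)^Suc n)"
    using power_half_series by (intro suminf_ennreal2) (auto simp: sums_iff)
  also have "\<dots> = 1"
    using power_half_series by (simp add: sums_iff)
  finally show ?thesis .
qed

lemma nn_integral_geometric_series_le:
  fixes f :: "nat \<Rightarrow> 'a \<Rightarrow> ennreal"
  assumes "\<And>n. f n \<in> borel_measurable M" "\<And>n. (\<integral>\<^sup>+x. f n x \<partial>M) \<le> C"
  shows "(\<integral>\<^sup>+x. (\<Sum>n. ennreal ((1/2)^Suc n) * f n x) \<partial>M) \<le> C"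
proof -
  have "(\<integral>\<^sup>+x. (\<Sum>n. ennreal ((1/2)^Suc n) * f n x) \<partial>M)
      = (\<Sum>n. ennreal ((1/2)^Suc n) * (\<integral>\<^sup>+x. f n x \<partial>M))"
    using assms(1) by (simp add: nn_integral_suminf nn_integral_cmult)
  also have "\<dots> \<le> (\<Sum>n. ennreal ((1/2)^Suc n) * C)"
    using assms(2) by (intro suminf_le mult_left_mono) auto
  also have "\<dots> = C"
    using suminf_ennreal_power_half by simp
  finally show ?thesis .
qed

lemma strongly_convex_geometric_series:
  assumes sc: "strongly_convex \<phi>" and x: "\<And>n. 0 \<le> x n"
    and fin: "(\<Sum>n. ennreal ((1/2)^Suc n) * ennreal (\<phi> (x n))) \<noteq> \<top>"
  shows "summable (\<lambda>n. (1/2)^Suc n * x n)"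
    and "ennreal (\<phi> (\<Sum>n. (1/2)^Suc n * x n)) \<le> (\<Sum>n. ennreal ((1/2)^Suc n) * ennreal (\<phi> (x n)))"
proof -
  note \<phi>_nonneg = strongly_convex_nonneg[OF sc]
  obtain T where T: "\<And>t. 0 \<le> t \<Longrightarrow> t \<le> \<phi> t + T"
    using strongly_convex_superlinear[OF sc] by blast
  have ennreal_terms: "(\<Sum>n. ennreal ((1/2)^Suc n) * ennreal (\<phi> (x n)))
      = (\<Sum>n. ennreal ((1/2)^Suc n * \<phi> (x n)))"
    by (intro suminf_cong ennreal_mult'[symmetric]) simp
  have sum_fx: "summable (\<lambda>n. (1/2)^Suc n * \<phi> (x n))"
    using fin \<phi>_nonneg unfolding ennreal_terms by (intro summable_suminf_not_top) auto
  have "summable (\<lambda>n. (1/2)^Suc n * (\<phi> (x n) + T))"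
    unfolding distrib_left using sum_fx by (intro summable_add summable_mult2 summable_geometric_iff) auto
  moreover have "norm ((1/2)^Suc n * x n) \<le> (1/2)^Suc n * (\<phi> (x n) + T)" for n
    using T[OF x] x by (simp add: mult_left_mono)
  ultimately show sum_x: "summable (\<lambda>n. (1/2)^Suc n * x n)"
    by (rule summable_comparison_test')
  have "\<phi> (\<Sum>n. (1/2)^Suc n * x n) \<le> (\<Sum>n. (1/2)^Suc n * \<phi> (x n))"
    using strongly_convex_convex_on[OF sc] sum_x sum_fx by (rule convex_on_geometric_suminf_le)
  then have "ennreal (\<phi> (\<Sum>n. (1/2)^Suc n * x n)) \<le> ennreal (\<Sum>n. (1/2)^Suc n * \<phi> (x n))"
    by (rule ennreal_leI)
  also have "\<dots> = (\<Sum>n. ennreal ((1/2)^Suc n) * ennreal (\<phi> (x n)))"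
    unfolding ennreal_terms by (rule suminf_ennreal2[OF _ sum_fx, symmetric]) (simp add: \<phi>_nonneg)
  finally show "ennreal (\<phi> (\<Sum>n. (1/2)^Suc n * x n)) \<le> (\<Sum>n. ennreal ((1/2)^Suc n) * ennreal (\<phi> (x n)))" .
qed

section \<open>Orlicz spaces on the circle\<close>

lemma orlicz_space_integrable:
  assumes "strongly_convex \<phi>" "u \<in> orlicz_space \<phi>"
  shows "integrable circle_measure u"
proof -
  obtain T where T: "\<And>t. 0 \<le> t \<Longrightarrow> t \<le> \<phi> t + T"
    using strongly_convex_superlinear[OF assms(1)] by blast
  show ?thesis
  proof (rule Bochner_Integration.integrable_bound)
    show "integrable circle_measure (\<lambda>\<zeta>. \<phi> \<bar>u \<zeta>\<bar> + T)"
      using assms(2) by (simp add: orlicz_space_def)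
    show "AE \<zeta> in circle_measure. norm (u \<zeta>) \<le> norm (\<phi> \<bar>u \<zeta>\<bar> + T)"
      using T by (intro AE_I2) (smt (verit) abs_ge_zero real_norm_def)
  qed (use assms(2) in \<open>simp add: orlicz_space_def\<close>)
qed

lemma orlicz_space_abs: "u \<in> orlicz_space \<phi> \<Longrightarrow> (\<lambda>\<zeta>. \<bar>u \<zeta>\<bar>) \<in> orlicz_space \<phi>"
  by (simp add: orlicz_space_def borel_measurable_abs)

lemma orlicz_norm_abs [simp]: "orlicz_norm \<psi> (\<lambda>\<zeta>. \<bar>u \<zeta>\<bar>) = orlicz_norm \<psi> u"
  by (simp add: orlicz_norm_def)

lemma orlicz_space_scale:
  assumes "strongly_convex \<phi>" "u \<in> orlicz_space \<phi>" "\<bar>c\<bar> \<le> 1"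
  shows "(\<lambda>\<zeta>. c * u \<zeta>) \<in> orlicz_space \<phi>"
proof -
  have [measurable]: "u \<in> borel_measurable borel" "\<phi> \<in> borel_measurable borel"
    using assms(2) borel_measurable_strongly_convex[OF assms(1)] by (auto simp: orlicz_space_def)
  have "integrable circle_measure (\<lambda>\<zeta>. \<phi> \<bar>c * u \<zeta>\<bar>)"
  proof (rule Bochner_Integration.integrable_bound)
    show "integrable circle_measure (\<lambda>\<zeta>. \<phi> \<bar>u \<zeta>\<bar>)"
      using assms(2) by (simp add: orlicz_space_def)
    have "\<phi> \<bar>c * u \<zeta>\<bar> \<le> \<phi> \<bar>u \<zeta>\<bar>" for \<zeta>
      using assms(3) by (intro monoD[OF strongly_convex_mono[OF assms(1)]])
        (simp add: abs_mult mult_left_le_one_le)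
    then show "AE \<zeta> in circle_measure. norm (\<phi> \<bar>c * u \<zeta>\<bar>) \<le> norm (\<phi> \<bar>u \<zeta>\<bar>)"
      using strongly_convex_nonneg[OF assms(1)] by simp
  qed simp
  then show ?thesis
    by (simp add: orlicz_space_def)
qed

lemma orlicz_norm_le_1I:
  assumes "(\<integral>\<^sup>+\<zeta>. ennreal (\<psi> \<bar>u \<zeta>\<bar>) \<partial>circle_measure) \<le> 1"
  shows "orlicz_norm \<psi> u \<le> 1"
  unfolding orlicz_norm_def
  by (rule cInf_lower) (use assms in \<open>auto intro: bdd_belowI[of _ 0]\<close>)

lemma orlicz_modular_scaled_le_1:
  assumes sc: "strongly_convex \<phi>" and am: "admissible_modification \<phi> \<psi>"
    and u: "u \<in> orlicz_space \<phi>"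
  obtains c where "0 < c" "c \<le> 1" "(\<integral>\<^sup>+\<zeta>. ennreal (\<psi> (c * \<bar>u \<zeta>\<bar>)) \<partial>circle_measure) \<le> 1"
proof -
  obtain C where C: "0 \<le> C" "\<And>s. 0 \<le> s \<Longrightarrow> \<psi> s \<le> \<phi> s + C"
    using admissible_modification_comparable[OF am strongly_convex_mono[OF sc] strongly_convex_nonneg[OF sc]]
    by metis
  have int: "integrable circle_measure (\<lambda>\<zeta>. \<phi> \<bar>u \<zeta>\<bar>)"
    using u by (simp add: orlicz_space_def)
  define K where "K = (\<integral>\<zeta>. \<phi> \<bar>u \<zeta>\<bar> \<partial>circle_measure) + C"
  have "0 \<le> K"
    unfolding K_def using C(1) strongly_convex_nonneg[OF sc] by (simp add: integral_nonneg)
  define c where "c = 1 / (1 + K)"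
  have c: "0 < c" "c \<le> 1" "c * K \<le> 1"
    using \<open>0 \<le> K\<close> by (auto simp: c_def field_simps)
  have "(\<integral>\<^sup>+\<zeta>. ennreal (\<psi> (c * \<bar>u \<zeta>\<bar>)) \<partial>circle_measure)
      \<le> (\<integral>\<^sup>+\<zeta>. ennreal (c * (\<phi> \<bar>u \<zeta>\<bar> + C)) \<partial>circle_measure)"
  proof (intro nn_integral_mono ennreal_leI)
    fix \<zeta>
    have "\<psi> (c * \<bar>u \<zeta>\<bar>) \<le> c * \<psi> \<bar>u \<zeta>\<bar>"
      using c by (intro admissible_modification_scale_le[OF am]) auto
    also have "\<dots> \<le> c * (\<phi> \<bar>u \<zeta>\<bar> + C)"
      using C(2)[of "\<bar>u \<zeta>\<bar>"] c by (intro mult_left_mono) auto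
    finally show "\<psi> (c * \<bar>u \<zeta>\<bar>) \<le> c * (\<phi> \<bar>u \<zeta>\<bar> + C)" .
  qed
  also have "\<dots> = ennreal (\<integral>\<zeta>. c * (\<phi> \<bar>u \<zeta>\<bar> + C) \<partial>circle_measure)"
    using int c C(1) strongly_convex_nonneg[OF sc] by (intro nn_integral_eq_integral) auto
  also have "\<dots> = ennreal (c * K)"
    using int circle.prob_space by (simp add: K_def)
  also have "\<dots> \<le> 1"
    using c by simp
  finally have "(\<integral>\<^sup>+\<zeta>. ennreal (\<psi> (c * \<bar>u \<zeta>\<bar>)) \<partial>circle_measure) \<le> 1" .
  with c(1,2) show ?thesis
    by (rule that)
qed

lemma orlicz_space_exists_scaled_unit:
  assumes sc: "strongly_convex \<phi>" and am: "admissible_modification \<phi> \<psi>"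
    and u: "u \<in> orlicz_space \<phi>"
  obtains c where "0 < c" "(\<lambda>\<zeta>. c * u \<zeta>) \<in> orlicz_space \<phi>" "orlicz_norm \<psi> (\<lambda>\<zeta>. c * u \<zeta>) \<le> 1"
proof -
  obtain c where c: "0 < c" "c \<le> 1" "(\<integral>\<^sup>+\<zeta>. ennreal (\<psi> (c * \<bar>u \<zeta>\<bar>)) \<partial>circle_measure) \<le> 1"
    using orlicz_modular_scaled_le_1[OF sc am u] .
  show ?thesis
  proof (rule that)
    show "(\<lambda>\<zeta>. c * u \<zeta>) \<in> orlicz_space \<phi>"
      using c by (intro orlicz_space_scale[OF sc u]) auto
    show "orlicz_norm \<psi> (\<lambda>\<zeta>. c * u \<zeta>) \<le> 1"
      using c by (intro orlicz_norm_le_1I) (simp add: abs_mult)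
  qed (fact c)
qed

lemma orlicz_norm_le_1D:
  assumes sc: "strongly_convex \<phi>" and am: "admissible_modification \<phi> \<psi>"
    and u: "u \<in> orlicz_space \<phi>" and norm: "orlicz_norm \<psi> u \<le> 1"
  shows "(\<integral>\<^sup>+\<zeta>. ennreal (\<psi> (\<bar>u \<zeta>\<bar> / 2)) \<partial>circle_measure) \<le> 2"
proof -
  define S where "S = {t. 0 < t \<and> (\<integral>\<^sup>+\<zeta>. ennreal (\<psi> (\<bar>u \<zeta>\<bar> / t)) \<partial>circle_measure) \<le> ennreal t}"
  obtain c where c: "0 < c" "c \<le> 1" "(\<integral>\<^sup>+\<zeta>. ennreal (\<psi> (c * \<bar>u \<zeta>\<bar>)) \<partial>circle_measure) \<le> 1"
    using orlicz_modular_scaled_le_1[OF sc am u] .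
  have "(\<integral>\<^sup>+\<zeta>. ennreal (\<psi> (\<bar>u \<zeta>\<bar> / (1 / c))) \<partial>circle_measure) \<le> ennreal (1 / c)"
    using c by (auto simp: mult.commute intro: order.trans[of _ 1])
  \<comment> \<open>Non-emptiness matters: \<open>Inf {}\<close> is unspecified on \<open>real\<close>.\<close>
  then have "1 / c \<in> S"
    using c by (simp add: S_def)
  then have "S \<noteq> {}"
    by blast
  moreover have "bdd_below S"
    by (auto simp: S_def intro: bdd_belowI[of _ 0])
  moreover have "Inf S < 2"
    using norm by (simp add: orlicz_norm_def S_def)
  ultimately obtain t where t: "t \<in> S" "t < 2"
    using cInf_less_iff by blast
  have "\<bar>u \<zeta>\<bar> / 2 \<le> \<bar>u \<zeta>\<bar> / t" for \<zeta>
    using t by (intro divide_left_mono) (auto simp: S_def)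
  then have "(\<integral>\<^sup>+\<zeta>. ennreal (\<psi> (\<bar>u \<zeta>\<bar> / 2)) \<partial>circle_measure)
      \<le> (\<integral>\<^sup>+\<zeta>. ennreal (\<psi> (\<bar>u \<zeta>\<bar> / t)) \<partial>circle_measure)"
    by (intro nn_integral_mono ennreal_leI admissible_modification_mono[OF am]) auto
  also have "\<dots> \<le> ennreal t"
    using t by (simp add: S_def)
  also have "\<dots> \<le> ennreal 2"
    using t(2) by (rule ennreal_leI[OF less_imp_le])
  finally show ?thesis
    by simp
qed

lemma orlicz_unit_ball_modular_bounded:
  assumes sc: "strongly_convex \<phi>" and am: "admissible_modification \<phi> \<psi>"
  obtains C where "\<And>u. u \<in> orlicz_space \<phi> \<Longrightarrow> orlicz_norm \<psi> u \<le> 1 \<Longrightarrow>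
    (\<integral>\<^sup>+\<zeta>. ennreal (\<phi> (\<bar>u \<zeta>\<bar> / 2)) \<partial>circle_measure) \<le> ennreal C"
proof -
  obtain C where C: "0 \<le> C" "\<And>s. 0 \<le> s \<Longrightarrow> \<phi> s \<le> \<psi> s + C"
    using admissible_modification_comparable[OF am strongly_convex_mono[OF sc] strongly_convex_nonneg[OF sc]]
    by metis
  have "(\<integral>\<^sup>+\<zeta>. ennreal (\<phi> (\<bar>u \<zeta>\<bar> / 2)) \<partial>circle_measure) \<le> ennreal (2 + C)"
    if u: "u \<in> orlicz_space \<phi>" "orlicz_norm \<psi> u \<le> 1" for u
  proof -
    have [measurable]: "u \<in> borel_measurable borel"
      using u by (simp add: orlicz_space_def)
    have "(\<integral>\<^sup>+\<zeta>. ennreal (\<phi> (\<bar>u \<zeta>\<bar> / 2)) \<partial>circle_measure)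
        \<le> (\<integral>\<^sup>+\<zeta>. ennreal (\<psi> (\<bar>u \<zeta>\<bar> / 2)) + ennreal C \<partial>circle_measure)"
    proof (intro nn_integral_mono)
      fix \<zeta>
      have "\<phi> (\<bar>u \<zeta>\<bar> / 2) \<le> \<psi> (\<bar>u \<zeta>\<bar> / 2) + C"
        using C(2) by simp
      then show "ennreal (\<phi> (\<bar>u \<zeta>\<bar> / 2)) \<le> ennreal (\<psi> (\<bar>u \<zeta>\<bar> / 2)) + ennreal C"
        using C(1) admissible_modification_nonneg[OF am, of "\<bar>u \<zeta>\<bar> / 2"]
        by (simp add: ennreal_plus[symmetric] ennreal_leI del: ennreal_plus)
    qed
    also have "\<dots> = (\<integral>\<^sup>+\<zeta>. ennreal (\<psi> (\<bar>u \<zeta>\<bar> / 2)) \<partial>circle_measure) + ennreal C"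
      using borel_measurable_admissible_modification[OF am, of "\<lambda>\<zeta>. \<bar>u \<zeta>\<bar> / 2"]
      by (subst nn_integral_add) auto
    also have "\<dots> \<le> 2 + ennreal C"
      using orlicz_norm_le_1D[OF sc am u] by (rule add_right_mono)
    finally show ?thesis
      using C(1) by (simp add: ennreal_plus)
  qed
  then show ?thesis
    using that by blast
qed

lemma orlicz_space_geometric_series:
  assumes sc: "strongly_convex \<phi>" and am: "admissible_modification \<phi> \<psi>"
    and u: "\<And>n. u n \<in> orlicz_space \<phi>" "\<And>n. orlicz_norm \<psi> (u n) \<le> 1"
  defines "w \<equiv> \<lambda>\<zeta>. \<Sum>n. (1/2)^Suc n * (\<bar>u n \<zeta>\<bar> / 2)"
  shows "w \<in> orlicz_space \<phi>"
    and "AE \<zeta> in circle_measure. \<forall>n. (1/2)^Suc n * (\<bar>u n \<zeta>\<bar> / 2) \<le> w \<zeta>"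
proof -
  obtain C where C: "\<And>n. (\<integral>\<^sup>+\<zeta>. ennreal (\<phi> (\<bar>u n \<zeta>\<bar> / 2)) \<partial>circle_measure) \<le> ennreal C"
    using orlicz_unit_ball_modular_bounded[OF sc am] u by metis
  have [measurable]: "u n \<in> borel_measurable borel" for n
    using u(1) by (simp add: orlicz_space_def)
  have [measurable]: "\<phi> \<in> borel_measurable borel"
    using sc by (rule borel_measurable_strongly_convex)
  define E where "E \<zeta> = (\<Sum>n. ennreal ((1/2)^Suc n) * ennreal (\<phi> (\<bar>u n \<zeta>\<bar> / 2)))" for \<zeta>
  have E_measurable: "E \<in> borel_measurable circle_measure"
    unfolding E_def by measurable
  have "(\<integral>\<^sup>+\<zeta>. E \<zeta> \<partial>circle_measure) \<le> ennreal C"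
    unfolding E_def using C by (intro nn_integral_geometric_series_le) measurable
  then have E_finite: "(\<integral>\<^sup>+\<zeta>. E \<zeta> \<partial>circle_measure) < \<top>"
    by (rule le_less_trans) simp
  then have "AE \<zeta> in circle_measure. E \<zeta> \<noteq> \<top>"
    using nn_integral_PInf_AE[OF E_measurable] by simp
  moreover have "0 \<le> w \<zeta> \<and> ennreal (\<phi> \<bar>w \<zeta>\<bar>) \<le> E \<zeta> \<and> (\<forall>n. (1/2)^Suc n * (\<bar>u n \<zeta>\<bar> / 2) \<le> w \<zeta>)"
    if "E \<zeta> \<noteq> \<top>" for \<zeta>
  proof -
    note series = strongly_convex_geometric_series[OF sc, of "\<lambda>n. \<bar>u n \<zeta>\<bar> / 2"]
    have sum: "summable (\<lambda>n. (1/2)^Suc n * (\<bar>u n \<zeta>\<bar> / 2))"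
      using series(1) that by (simp add: E_def)
    have "0 \<le> w \<zeta>"
      unfolding w_def by (rule suminf_nonneg[OF sum]) simp
    moreover have "ennreal (\<phi> (w \<zeta>)) \<le> E \<zeta>"
      using series(2) that by (simp add: E_def w_def)
    moreover have "(1/2)^Suc n * (\<bar>u n \<zeta>\<bar> / 2) \<le> w \<zeta>" for n
      unfolding w_def using sum_le_suminf[OF sum, of "{n}"] by simp
    ultimately show ?thesis
      by simp
  qed
  ultimately have bounds: "AE \<zeta> in circle_measure. 0 \<le> w \<zeta> \<and> ennreal (\<phi> \<bar>w \<zeta>\<bar>) \<le> E \<zeta>
      \<and> (\<forall>n. (1/2)^Suc n * (\<bar>u n \<zeta>\<bar> / 2) \<le> w \<zeta>)"
    by (rule eventually_mono)
  then show "AE \<zeta> in circle_measure. \<forall>n. (1/2)^Suc n * (\<bar>u n \<zeta>\<bar> / 2) \<le> w \<zeta>"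
    by (rule eventually_mono) blast
  have [measurable]: "w \<in> borel_measurable borel"
    unfolding w_def by measurable
  have "(\<integral>\<^sup>+\<zeta>. ennreal (norm (\<phi> \<bar>w \<zeta>\<bar>)) \<partial>circle_measure) \<le> (\<integral>\<^sup>+\<zeta>. E \<zeta> \<partial>circle_measure)"
    using strongly_convex_nonneg[OF sc] by (intro nn_integral_mono_AE eventually_mono[OF bounds]) auto
  then have "integrable circle_measure (\<lambda>\<zeta>. \<phi> \<bar>w \<zeta>\<bar>)"
    using E_finite by (subst integrable_iff_bounded) auto
  then show "w \<in> orlicz_space \<phi>"
    by (simp add: orlicz_space_def)
qed

section \<open>The dual norm of a nonnegative function\<close>

definition dual_pairing :: "(complex \<Rightarrow> ennreal) \<Rightarrow> (complex \<Rightarrow> real) \<Rightarrow> ennreal" where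
  "dual_pairing g u = (\<integral>\<^sup>+\<zeta>. ennreal \<bar>u \<zeta>\<bar> * g \<zeta> \<partial>circle_measure)"

lemma dual_pairing_abs [simp]: "dual_pairing g (\<lambda>\<zeta>. \<bar>u \<zeta>\<bar>) = dual_pairing g u"
  by (simp add: dual_pairing_def)

lemma dual_pairing_cmult:
  assumes "g \<in> borel_measurable borel" "u \<in> borel_measurable borel"
  shows "dual_pairing g (\<lambda>\<zeta>. c * u \<zeta>) = ennreal \<bar>c\<bar> * dual_pairing g u"
proof -
  have "dual_pairing g (\<lambda>\<zeta>. c * u \<zeta>) = (\<integral>\<^sup>+\<zeta>. ennreal \<bar>c\<bar> * (ennreal \<bar>u \<zeta>\<bar> * g \<zeta>) \<partial>circle_measure)"
    unfolding dual_pairing_def by (simp add: abs_mult ennreal_mult mult.assoc)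
  also have "\<dots> = ennreal \<bar>c\<bar> * dual_pairing g u"
    unfolding dual_pairing_def using assms by (intro nn_integral_cmult) simp
  finally show ?thesis .
qed

lemma dual_pairing_mono_AE:
  assumes "AE \<zeta> in circle_measure. \<bar>u \<zeta>\<bar> \<le> \<bar>v \<zeta>\<bar>"
  shows "dual_pairing g u \<le> dual_pairing g v"
  unfolding dual_pairing_def
proof (rule nn_integral_mono_AE)
  show "AE \<zeta> in circle_measure. ennreal \<bar>u \<zeta>\<bar> * g \<zeta> \<le> ennreal \<bar>v \<zeta>\<bar> * g \<zeta>"
    using assms by eventually_elim (intro mult_right_mono ennreal_leI, auto)
qed

lemma dual_norm_eq_SUP_pairing:
  "dual_norm \<phi> \<psi> g = (SUP u \<in> {u. u \<in> orlicz_space \<phi> \<and> orlicz_norm \<psi> u \<le> 1}. dual_pairing g u)"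
  by (simp add: dual_norm_def dual_pairing_def)

lemma dual_pairing_le_dual_norm:
  "u \<in> orlicz_space \<phi> \<Longrightarrow> orlicz_norm \<psi> u \<le> 1 \<Longrightarrow> dual_pairing g u \<le> dual_norm \<phi> \<psi> g"
  unfolding dual_norm_eq_SUP_pairing by (rule SUP_upper) simp

lemma dual_norm_eq_SUP_nonneg:
  "dual_norm \<phi> \<psi> g = (SUP w \<in> {w. w \<in> orlicz_space \<phi> \<and> (AE \<zeta> in circle_measure. 0 \<le> w \<zeta>)
                                  \<and> orlicz_norm \<psi> w \<le> 1}. dual_pairing g w)"
  unfolding dual_norm_eq_SUP_pairing
proof (rule SUP_eq)
  fix u assume "u \<in> {u. u \<in> orlicz_space \<phi> \<and> orlicz_norm \<psi> u \<le> 1}"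
  then show "\<exists>w \<in> {w. w \<in> orlicz_space \<phi> \<and> (AE \<zeta> in circle_measure. 0 \<le> w \<zeta>) \<and> orlicz_norm \<psi> w \<le> 1}.
      dual_pairing g u \<le> dual_pairing g w"
    by (intro bexI[of _ "\<lambda>\<zeta>. \<bar>u \<zeta>\<bar>"]) (auto simp: orlicz_space_abs)
qed auto

lemma dual_pairing_finite_if_dual_norm_finite:
  assumes sc: "strongly_convex \<phi>" and am: "admissible_modification \<phi> \<psi>"
    and g: "g \<in> borel_measurable borel" and fin: "dual_norm \<phi> \<psi> g < \<infinity>"
    and u: "u \<in> orlicz_space \<phi>"
  shows "dual_pairing g u < \<infinity>"
proof -
  obtain c where c: "0 < c" "(\<lambda>\<zeta>. c * u \<zeta>) \<in> orlicz_space \<phi>" "orlicz_norm \<psi> (\<lambda>\<zeta>. c * u \<zeta>) \<le> 1"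
    using orlicz_space_exists_scaled_unit[OF sc am u] .
  have "ennreal c * dual_pairing g u = dual_pairing g (\<lambda>\<zeta>. c * u \<zeta>)"
    using g u c(1) by (simp add: dual_pairing_cmult orlicz_space_def)
  also have "\<dots> \<le> dual_norm \<phi> \<psi> g"
    using c(2,3) by (rule dual_pairing_le_dual_norm)
  also have "\<dots> < \<infinity>"
    by (fact fin)
  finally show ?thesis
    using c(1) by (auto simp: ennreal_mult_less_top)
qed

lemma dual_norm_infinite_obtain_large_pairings:
  fixes a :: "nat \<Rightarrow> real"
  assumes "\<not> dual_norm \<phi> \<psi> g < \<infinity>"
  obtains u where "\<And>n. u n \<in> orlicz_space \<phi>" "\<And>n. orlicz_norm \<psi> (u n) \<le> 1"
    "\<And>n. ennreal (a n) < dual_pairing g (u n)"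
proof -
  have top: "(SUP u \<in> {u. u \<in> orlicz_space \<phi> \<and> orlicz_norm \<psi> u \<le> 1}. dual_pairing g u) = \<infinity>"
    using assms unfolding dual_norm_eq_SUP_pairing
    by (simp only: infinity_ennreal_def less_top[symmetric] not_not)
  have "ennreal (a n) < (SUP u \<in> {u. u \<in> orlicz_space \<phi> \<and> orlicz_norm \<psi> u \<le> 1}. dual_pairing g u)"
    for n :: nat
    unfolding top by simp
  then have "\<forall>n. \<exists>u. (u \<in> orlicz_space \<phi> \<and> orlicz_norm \<psi> u \<le> 1) \<and> ennreal (a n) < dual_pairing g u"
    unfolding less_SUP_iff by blast
  then show ?thesis
    using that by (auto dest!: choice)
qed

lemma dual_norm_finite_if_dual_pairing_finite:
  assumes sc: "strongly_convex \<phi>" and am: "admissible_modification \<phi> \<psi>"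
    and g: "g \<in> borel_measurable borel"
    and fin: "\<And>u. u \<in> orlicz_space \<phi> \<Longrightarrow> dual_pairing g u < \<infinity>"
  shows "dual_norm \<phi> \<psi> g < \<infinity>"
proof (rule ccontr)
  assume "\<not> dual_norm \<phi> \<psi> g < \<infinity>"
  then obtain u where u: "\<And>n. u n \<in> orlicz_space \<phi>" "\<And>n. orlicz_norm \<psi> (u n) \<le> 1"
    and large: "\<And>n. ennreal (2^(n+2) * real n) < dual_pairing g (u n)"
    by (rule dual_norm_infinite_obtain_large_pairings[where a = "\<lambda>n. 2^(n+2) * real n"]) blast
  define w where "w \<zeta> = (\<Sum>n. (1/2)^Suc n * (\<bar>u n \<zeta>\<bar> / 2))" for \<zeta>
  note w = orlicz_space_geometric_series[of \<phi> \<psi> u, OF sc am u, folded w_def]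
  have bound: "ennreal (real n) \<le> dual_pairing g w" for n
  proof -
    have "ennreal (real n) = ennreal ((1/2)^(n+2) * (2^(n+2) * real n))"
      by (simp add: power_one_over)
    also have "\<dots> = ennreal ((1/2)^(n+2)) * ennreal (2^(n+2) * real n)"
      by (rule ennreal_mult') simp
    also have "\<dots> \<le> ennreal ((1/2)^(n+2)) * dual_pairing g (u n)"
      using large[of n] by (intro mult_left_mono) auto
    also have "\<dots> = dual_pairing g (\<lambda>\<zeta>. (1/2)^(n+2) * u n \<zeta>)"
      using u(1)[of n] by (subst dual_pairing_cmult[OF g]) (auto simp: orlicz_space_def)
    also have "\<dots> \<le> dual_pairing g w"
    proof (intro dual_pairing_mono_AE eventually_mono[OF w(2)])
      fix \<zeta> assume "\<forall>m. (1/2)^Suc m * (\<bar>u m \<zeta>\<bar> / 2) \<le> w \<zeta>"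
      moreover have "\<bar>(1/2)^(n+2) * u n \<zeta>\<bar> = (1/2)^Suc n * (\<bar>u n \<zeta>\<bar> / 2)"
        by (simp add: abs_mult)
      ultimately show "\<bar>(1/2)^(n+2) * u n \<zeta>\<bar> \<le> \<bar>w \<zeta>\<bar>"
        by (metis abs_ge_self order.trans)
    qed
    finally show ?thesis .
  qed
  obtain n where "dual_pairing g w < of_nat n"
    using ennreal_Ex_less_of_nat fin[OF w(1)] by auto
  with bound[of n] show False
    by (simp add: ennreal_of_nat_eq_real_of_nat)
qed

lemma dual_norm_finite_iff:
  assumes "strongly_convex \<phi>" "admissible_modification \<phi> \<psi>" "g \<in> borel_measurable borel"
  shows "dual_norm \<phi> \<psi> g < \<infinity> \<longleftrightarrow> (\<forall>u \<in> orlicz_space \<phi>. dual_pairing g u < \<infinity>)"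
  using dual_pairing_finite_if_dual_norm_finite[OF assms] dual_norm_finite_if_dual_pairing_finite[OF assms]
  by blast

section \<open>Poisson balayage\<close>

lemma poisson_kernel_nonneg: "cmod z \<le> 1 \<Longrightarrow> 0 \<le> poisson_kernel z \<zeta>"
  unfolding poisson_kernel_def by (intro divide_nonneg_nonneg) (auto simp: power_le_one)

lemma poisson_kernel_le:
  assumes "cmod z < 1" "cmod \<zeta> = 1"
  shows "poisson_kernel z \<zeta> \<le> 1 / (1 - cmod z)\<^sup>2"
proof -
  have "1 - cmod z \<le> cmod (\<zeta> - z)"
    using norm_triangle_ineq2[of \<zeta> z] assms by simp
  then have "(1 - cmod z)\<^sup>2 \<le> (cmod (\<zeta> - z))\<^sup>2"
    using assms by (intro power_mono) auto
  moreover have "0 \<le> 1 - (cmod z)\<^sup>2" "1 - (cmod z)\<^sup>2 \<le> 1"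
    using assms by (auto simp: power_le_one)
  ultimately show ?thesis
    unfolding poisson_kernel_def using assms by (intro frac_le) auto
qed

lemma integrable_poisson_kernel_mult:
  assumes z: "cmod z < 1" and w: "integrable circle_measure w"
  shows "integrable circle_measure (\<lambda>\<zeta>. poisson_kernel z \<zeta> * w \<zeta>)"
proof (rule Bochner_Integration.integrable_bound)
  show "integrable circle_measure (\<lambda>\<zeta>. 1 / (1 - cmod z)\<^sup>2 * w \<zeta>)"
    using w by (rule integrable_mult_right)
  have [measurable]: "w \<in> borel_measurable borel"
    using borel_measurable_integrable[OF w] by simp
  show "(\<lambda>\<zeta>. poisson_kernel z \<zeta> * w \<zeta>) \<in> borel_measurable circle_measure"
    unfolding poisson_kernel_def by simp
  show "AE \<zeta> in circle_measure. norm (poisson_kernel z \<zeta> * w \<zeta>) \<le> norm (1 / (1 - cmod z)\<^sup>2 * w \<zeta>)"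
    using AE_circle_measure_norm_eq_1
  proof eventually_elim
    case (elim \<zeta>)
    have "poisson_kernel z \<zeta> * \<bar>w \<zeta>\<bar> \<le> 1 / (1 - cmod z)\<^sup>2 * \<bar>w \<zeta>\<bar>"
      using poisson_kernel_le[OF z elim] by (rule mult_right_mono) simp
    then show ?case
      using z poisson_kernel_nonneg[of z \<zeta>] by (simp add: abs_mult)
  qed
qed

lemma borel_measurable_balayage:
  assumes "sets \<mu> = sets borel" "sigma_finite_measure \<mu>"
  shows "balayage \<mu> \<in> borel_measurable borel"
proof -
  interpret \<mu>: sigma_finite_measure \<mu> by fact
  have "sets (borel \<Otimes>\<^sub>M \<mu>) = sets (borel \<Otimes>\<^sub>M borel)"
    using assms(1) by (intro sets_pair_measure_cong) auto
  moreover have "(\<lambda>(\<zeta>, z). ennreal (poisson_kernel z \<zeta>)) \<in> borel_measurable (borel \<Otimes>\<^sub>M borel)"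
    unfolding poisson_kernel_def by measurable
  ultimately have "(\<lambda>(\<zeta>, z). ennreal (poisson_kernel z \<zeta>)) \<in> borel_measurable (borel \<Otimes>\<^sub>M \<mu>)"
    by (subst measurable_cong_sets) auto
  then show ?thesis
    unfolding balayage_def by (rule \<mu>.borel_measurable_nn_integral)
qed

lemma dual_pairing_balayage:
  assumes \<mu>: "sets \<mu> = sets borel" "sigma_finite_measure \<mu>" "emeasure \<mu> (- ball 0 1) = 0"
    and w: "integrable circle_measure w" "AE \<zeta> in circle_measure. 0 \<le> w \<zeta>"
  shows "dual_pairing (balayage \<mu>) w = (\<integral>\<^sup>+z. ennreal (poisson_integral w z) \<partial>\<mu>)"
proof -
  interpret pair_sigma_finite \<mu> circle_measure
    using \<mu>(2) by (simp add: pair_sigma_finite_def circle.sigma_finite_measure_axioms)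
  have [measurable]: "w \<in> borel_measurable borel"
    using borel_measurable_integrable[OF w(1)] by simp
  have "sets (\<mu> \<Otimes>\<^sub>M circle_measure) = sets (borel \<Otimes>\<^sub>M borel)"
    using \<mu>(1) by (intro sets_pair_measure_cong) auto
  moreover have "(\<lambda>(z, \<zeta>). ennreal (poisson_kernel z \<zeta> * \<bar>w \<zeta>\<bar>)) \<in> borel_measurable (borel \<Otimes>\<^sub>M borel)"
    unfolding poisson_kernel_def by measurable
  ultimately have joint: "(\<lambda>(z, \<zeta>). ennreal (poisson_kernel z \<zeta> * \<bar>w \<zeta>\<bar>))
      \<in> borel_measurable (\<mu> \<Otimes>\<^sub>M circle_measure)"
    by (subst measurable_cong_sets) auto
  have kernel: "(\<lambda>z. ennreal (poisson_kernel z \<zeta>)) \<in> borel_measurable \<mu>" for \<zeta>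
    using \<mu>(1) unfolding poisson_kernel_def by (subst measurable_cong_sets) auto
  have "AE z in \<mu>. z \<notin> - ball 0 1"
    using \<mu> by (intro AE_not_in) (auto simp: null_sets_def)
  then have disc: "AE z in \<mu>. cmod z < 1"
    by simp
  have "dual_pairing (balayage \<mu>) w
      = (\<integral>\<^sup>+\<zeta>. \<integral>\<^sup>+z. ennreal (poisson_kernel z \<zeta> * \<bar>w \<zeta>\<bar>) \<partial>\<mu> \<partial>circle_measure)"
    unfolding dual_pairing_def balayage_def
    by (simp add: nn_integral_cmult[OF kernel, symmetric] ennreal_mult'' mult.commute)
  also have "\<dots> = (\<integral>\<^sup>+z. \<integral>\<^sup>+\<zeta>. ennreal (poisson_kernel z \<zeta> * \<bar>w \<zeta>\<bar>) \<partial>circle_measure \<partial>\<mu>)"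
    using joint by (rule Fubini')
  also have "\<dots> = (\<integral>\<^sup>+z. ennreal (poisson_integral w z) \<partial>\<mu>)"
    using disc
  proof (intro nn_integral_cong_AE, eventually_elim)
    case (elim z)
    have "AE \<zeta> in circle_measure. poisson_kernel z \<zeta> * \<bar>w \<zeta>\<bar> = poisson_kernel z \<zeta> * w \<zeta>"
      using w(2) by eventually_elim simp
    then have "(\<integral>\<zeta>. poisson_kernel z \<zeta> * \<bar>w \<zeta>\<bar> \<partial>circle_measure) = poisson_integral w z"
      unfolding poisson_integral_def
      by (intro integral_cong_AE) (auto simp: poisson_kernel_def)
    moreover have "integrable circle_measure (\<lambda>\<zeta>. poisson_kernel z \<zeta> * \<bar>w \<zeta>\<bar>)"
      using elim w(1) by (intro integrable_poisson_kernel_mult integrable_abs)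
    ultimately show ?case
      using elim poisson_kernel_nonneg[of z]
      by (subst nn_integral_eq_integral) auto
  qed
  finally show ?thesis .
qed

theorem proposition5p1:
  fixes \<phi> \<psi> :: "real \<Rightarrow> real" and \<mu> :: "complex measure"
  assumes "strongly_convex \<phi>"
    and "admissible_modification \<phi> \<psi>"
    and "sets \<mu> = sets borel" and "finite_measure \<mu>"
    and "emeasure \<mu> (- ball 0 1) = 0"
  shows "(dual_norm \<phi> \<psi> (balayage \<mu>) < \<infinity> \<longleftrightarrow>
           (\<forall>w. w \<in> orlicz_space \<phi> \<and> (AE \<zeta> in circle_measure. 0 \<le> w \<zeta>) \<longrightarrow>
                (\<integral>\<^sup>+ z. ennreal (poisson_integral w z) \<partial>\<mu>) < \<infinity>))
       \<and> dual_norm \<phi> \<psi> (balayage \<mu>) =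
           (SUP w \<in> {w. w \<in> orlicz_space \<phi> \<and> (AE \<zeta> in circle_measure. 0 \<le> w \<zeta>)
                       \<and> orlicz_norm \<psi> w \<le> 1}.
              \<integral>\<^sup>+ z. ennreal (poisson_integral w z) \<partial>\<mu>)"
proof -
  have \<sigma>: "sigma_finite_measure \<mu>"
    using assms(4) by (rule finite_measure.sigma_finite_measure)
  have B: "balayage \<mu> \<in> borel_measurable borel"
    using assms(3) \<sigma> by (rule borel_measurable_balayage)
  have P: "dual_pairing (balayage \<mu>) w = (\<integral>\<^sup>+ z. ennreal (poisson_integral w z) \<partial>\<mu>)"
    if "w \<in> orlicz_space \<phi>" "AE \<zeta> in circle_measure. 0 \<le> w \<zeta>" for w
    using assms(3) \<sigma> assms(5) orlicz_space_integrable[OF assms(1) that(1)] that(2)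
    by (rule dual_pairing_balayage)
  have "dual_norm \<phi> \<psi> (balayage \<mu>) < \<infinity> \<longleftrightarrow>
      (\<forall>w. w \<in> orlicz_space \<phi> \<and> (AE \<zeta> in circle_measure. 0 \<le> w \<zeta>) \<longrightarrow>
        (\<integral>\<^sup>+ z. ennreal (poisson_integral w z) \<partial>\<mu>) < \<infinity>)"
    unfolding dual_norm_finite_iff[OF assms(1,2) B]
    by (metis P dual_pairing_abs orlicz_space_abs abs_ge_zero AE_I2)
  moreover have "dual_norm \<phi> \<psi> (balayage \<mu>) =
      (SUP w \<in> {w. w \<in> orlicz_space \<phi> \<and> (AE \<zeta> in circle_measure. 0 \<le> w \<zeta>) \<and> orlicz_norm \<psi> w \<le> 1}.
        \<integral>\<^sup>+ z. ennreal (poisson_integral w z) \<partial>\<mu>)"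
    unfolding dual_norm_eq_SUP_nonneg by (intro SUP_cong) (auto simp: P)
  ultimately show ?thesis ..
qed

end
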